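(* In the one-dimensional perturbed elephant random walk with stops, suppose $\epsilon+r\neq1$ and $\gamma=\frac{1+\epsilon r}{2}$. Then for all $t\ge1$ $$\mathbb{E}[X_t^2]=-\frac{t}{r(\epsilon+r)}-\frac{r\,\Gamma(t+1-\epsilon-r)}{(\epsilon+r)(\epsilon+r+\epsilon r)\Gamma(1-\epsilon-r)\Gamma(t)}+\frac{1}{\Gamma(1+\epsilon r)}\Big[\frac{1}{r(\epsilon+r)}+\frac{r}{(\epsilon+r)(\epsilon+r+\epsilon r)}\Big]\frac{\Gamma(t+1+\epsilon r)}{\Gamma(t)},$$ and hence $$\lim_{t\to\infty}\frac{\mathbb{E}[X_t^2]}{t^{1+\epsilon r}}=\frac{1}{\Gamma(1+\epsilon r)}\Big[\frac{1}{r(\epsilon+r)}+\frac{r}{(\epsilon+r)(\epsilon+r+\epsilon r)}\Big].$$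
   Context: One-dimensional perturbed elephant random walk with stops (perturbed ERWS): fix $p,q,r\in(0,1)$ with $p+q+r=1$, $\epsilon\in(0,1)$ and $s\in(0,1)$, and set $\gamma=p-q$. The steps $\sigma_1,\sigma_2,\dots$ take values in $\{-1,0,1\}$, $X_0=0$ and $X_t=\sigma_1+\dots+\sigma_t$. The first step satisfies $P(\sigma_1=1)=s$, $P(\sigma_1=-1)=1-s$. For $t\ge1$, conditionally on $\sigma_1,\dots,\sigma_t$, an index $k\in\{1,\dots,t\}$ is chosen uniformly at random. If $\sigma_k=\pm1$, then $\sigma_{t+1}=\sigma_k$ with probability $p$, $\sigma_{t+1}=-\sigma_k$ with probability $q$, and $\sigma_{t+1}=0$ with probability $r$. If $\sigma_k=0$, then $\sigma_{t+1}=1$ with probability $\epsilon/2$, $\sigma_{t+1}=-1$ with probability $\epsilon/2$, and $\sigma_{t+1}=0$ with probability $1-\epsilon$. *)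

theory Defs
  imports "HOL-Probability.Probability"
begin

text \<open>Conditional law of the next step sigma_{t+1}, given that the uniformly chosen
  remembered step is c (c in {-1,0,1}).\<close>
definition erws_next :: "real \<Rightarrow> real \<Rightarrow> real \<Rightarrow> real \<Rightarrow> int \<Rightarrow> int pmf" where
  "erws_next p q r eps c =
     (if c \<noteq> 0 then pmf_of_list [(c, p), (-c, q), (0, r)]
      else pmf_of_list [(1, eps/2), (-1, eps/2), (0, 1 - eps)])"

fun erws_steps :: "real \<Rightarrow> real \<Rightarrow> real \<Rightarrow> real \<Rightarrow> real \<Rightarrow> nat \<Rightarrow> int list pmf" where
  "erws_steps p q r eps s 0 = return_pmf []"
| "erws_steps p q r eps s (Suc 0) =
     map_pmf (\<lambda>b. [if b then 1 else -1]) (bernoulli_pmf s)"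
| "erws_steps p q r eps s (Suc (Suc n)) =
     bind_pmf (erws_steps p q r eps s (Suc n)) (\<lambda>xs.
       map_pmf (\<lambda>y. xs @ [y])
         (bind_pmf (pmf_of_set {0..<length xs}) (\<lambda>k. erws_next p q r eps (xs ! k))))"

definition erws_second_moment :: "real \<Rightarrow> real \<Rightarrow> real \<Rightarrow> real \<Rightarrow> real \<Rightarrow> nat \<Rightarrow> real" where
  "erws_second_moment p q r eps s t =
     measure_pmf.expectation (erws_steps p q r eps s t) (\<lambda>xs. (real_of_int (sum_list xs))\<^sup>2)"

end

theory Submission
  imports Defs
begin

text \<open>
  Let N_t = sigma_1^2 + ... + sigma_t^2 be the number of steps that are not stops. Given the
  first t steps the remembered step is uniform among them, so the next step has conditional mean
  gamma X_t / t and conditional second moment eps + (1 - r - eps) N_t / t. Hence W_t = E N_t and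
  M_t = E X_t^2 satisfy W_1 = M_1 = 1 and
    W_{t+1} = (1 + (1 - r - eps) / t) W_t + eps,
    M_{t+1} = (1 + 2 gamma / t) M_t + eps + (1 - r - eps) W_t / t.
  The ratio Gamma (t + a) / Gamma t solves f (t + 1) = (1 + a / t) f t, so both recursions are
  solved by a linear term plus multiples of this ratio for a = 1 - eps - r and a = 2 gamma = 1 + eps r.
  The limit follows from Gamma (t + a) / Gamma t ~ t^a.
\<close>

lemma expectation_pmf_of_list3:
  assumes "pmf_of_list_wf [(a, u), (b, v), (c, w)]" "distinct [a, b, c]"
  shows "measure_pmf.expectation (pmf_of_list [(a, u), (b, v), (c, w)]) f = u * f a + v * f b + w * f c"
proof -
  have "measure_pmf.expectation (pmf_of_list [(a, u), (b, v), (c, w)]) f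
      = (\<Sum>x\<in>{a, b, c}. f x * pmf (pmf_of_list [(a, u), (b, v), (c, w)]) x)"
    using set_pmf_of_list[OF assms(1)] by (intro integral_measure_pmf_real) auto
  moreover have "a \<noteq> b" "b \<noteq> a" "a \<noteq> c" "c \<noteq> a" "b \<noteq> c" "c \<noteq> b"
    using assms(2) by auto
  ultimately show ?thesis
    using assms(1) by (simp add: pmf_pmf_of_list algebra_simps)
qed

lemma expectation_shifted_square:
  fixes M :: "int pmf"
  assumes "finite (set_pmf M)"
  shows "measure_pmf.expectation M (\<lambda>y. (x + real_of_int y)\<^sup>2)
           = x\<^sup>2 + 2 * x * measure_pmf.expectation M real_of_int + measure_pmf.expectation M (\<lambda>y. (real_of_int y)\<^sup>2)"
proof -
  have [simp]: "integrable (measure_pmf M) f" for f :: "int \<Rightarrow> real"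
    using integrable_measure_pmf_finite[OF assms] .
  show ?thesis
    by (simp add: power2_sum add.assoc)
qed

definition Gamma_ratio :: "real \<Rightarrow> real \<Rightarrow> real" where
  "Gamma_ratio a x = Gamma (x + a) / Gamma x"

lemma Gamma_ratio_one:
  assumes "a \<notin> \<int>\<^sub>\<le>\<^sub>0"
  shows "Gamma_ratio a 1 = a * Gamma a"
  using Gamma_plus1[OF assms] by (simp add: Gamma_ratio_def add.commute)

lemma Gamma_ratio_plus1:
  assumes "x > 0" "x + a > 0"
  shows "Gamma_ratio a (x + 1) = (1 + a / x) * Gamma_ratio a x"
proof -
  have "x + a \<notin> \<int>\<^sub>\<le>\<^sub>0" "x \<notin> \<int>\<^sub>\<le>\<^sub>0"
    using assms by auto
  then have "Gamma (x + 1 + a) = (x + a) * Gamma (x + a)" "Gamma (x + 1) = x * Gamma x"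
    using Gamma_plus1[of "x + a"] Gamma_plus1[of x] by (simp_all add: add_ac)
  then show ?thesis
    using assms(1) by (simp add: Gamma_ratio_def field_simps)
qed

lemma Gamma_ratio_asymptotics:
  assumes a: "a \<notin> \<int>\<^sub>\<le>\<^sub>0"
  shows "(\<lambda>n. Gamma_ratio a (real n) / real n powr a) \<longlonglongrightarrow> 1"
proof -
  have Ga: "Gamma a \<noteq> 0"
    using a by (simp add: Gamma_eq_zero_iff)
  have "eventually (\<lambda>n. Gamma a / Gamma_series' a n = Gamma_ratio a (real n) / real n powr a) sequentially"
    using eventually_gt_at_top[of "0::nat"]
  proof eventually_elim
    case (elim n)
    \<comment> \<open>Gamma_series' a n is Gamma n * n powr a * Gamma a / Gamma (a + n).\<close>
    have "a + real n \<notin> \<int>\<^sub>\<le>\<^sub>0"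
      using a nonpos_Ints_diff_Nats[of "a + real n" "real n"] by auto
    then have "Gamma (a + real n) \<noteq> 0"
      by (simp add: Gamma_eq_zero_iff)
    moreover have "fact (n - 1) = Gamma (real n)"
      using Gamma_fact[of "n - 1", where 'a = real] elim by (simp add: of_nat_diff)
    moreover have "exp (a * ln (real n)) = real n powr a"
      using elim by (simp add: powr_def mult.commute)
    ultimately show ?case
      using elim Ga by (simp add: Gamma_series'_def pochhammer_Gamma[OF a] Gamma_ratio_def add.commute)
  qed
  moreover have "(\<lambda>n. Gamma a / Gamma_series' a n) \<longlonglongrightarrow> Gamma a / Gamma a"
    by (intro tendsto_divide tendsto_const Gamma_series'_LIMSEQ Ga)
  ultimately show ?thesis
    using Ga Lim_transform_eventually by fastforce
qed

locale perturbed_erws =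
  fixes p q r eps s :: real
  assumes p_nonneg: "0 \<le> p" and q_nonneg: "0 \<le> q" and r_nonneg: "0 \<le> r"
    and prob_sum: "p + q + r = 1" and eps_nonneg: "0 \<le> eps" and eps_le_1: "eps \<le> 1"
begin

lemma erws_next_wf:
  "pmf_of_list_wf [(c::int, p), (-c, q), (0, r)]"
  "pmf_of_list_wf [(1::int, eps/2), (-1, eps/2), (0, 1 - eps)]"
  using p_nonneg q_nonneg r_nonneg prob_sum eps_nonneg eps_le_1
  by (auto simp: pmf_of_list_wf_def)

lemma finite_set_pmf_erws_next: "finite (set_pmf (erws_next p q r eps c))"
  using erws_next_wf by (simp add: erws_next_def finite_set_pmf_of_list)

lemma set_pmf_erws_next:
  assumes "c \<in> {-1, 0, 1}"
  shows "set_pmf (erws_next p q r eps c) \<subseteq> {-1, 0, 1}"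
  using assms set_pmf_of_list[OF erws_next_wf(1)[of c]] set_pmf_of_list[OF erws_next_wf(2)]
  by (auto simp: erws_next_def)

lemma expectation_erws_next:
  "measure_pmf.expectation (erws_next p q r eps c) f =
     (if c = 0 then eps/2 * f 1 + eps/2 * f (-1) + (1 - eps) * f 0
      else p * f c + q * f (-c) + r * f 0)"
  using erws_next_wf by (simp add: erws_next_def expectation_pmf_of_list3)

lemma erws_next_mean:
  assumes "c \<in> {-1, 0, 1}"
  shows "measure_pmf.expectation (erws_next p q r eps c) real_of_int = (p - q) * c"
  using assms by (auto simp: expectation_erws_next)

lemma erws_next_square:
  assumes "c \<in> {-1, 0, 1}"
  shows "measure_pmf.expectation (erws_next p q r eps c) (\<lambda>y. (real_of_int y)\<^sup>2)
           = eps + (1 - r - eps) * (real_of_int c)\<^sup>2"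
  using assms prob_sum by (auto simp: expectation_erws_next)

definition next_step :: "int list \<Rightarrow> int pmf" where
  "next_step xs = pmf_of_set {0..<length xs} \<bind> (\<lambda>k. erws_next p q r eps (xs ! k))"

definition expected_moves :: "nat \<Rightarrow> real" where
  "expected_moves t = measure_pmf.expectation (erws_steps p q r eps s t) (\<lambda>xs. \<Sum>y\<leftarrow>xs. (real_of_int y)\<^sup>2)"

lemma erws_steps_Suc_Suc:
  "erws_steps p q r eps s (Suc (Suc n)) =
     erws_steps p q r eps s (Suc n) \<bind> (\<lambda>xs. map_pmf (\<lambda>y. xs @ [y]) (next_step xs))"
  by (simp add: next_step_def)

lemma set_pmf_next_step:
  assumes "set xs \<subseteq> {-1, 0, 1}" "xs \<noteq> []"
  shows "set_pmf (next_step xs) \<subseteq> {-1, 0, 1}"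
proof -
  have "{0..<length xs} \<noteq> {}"
    using assms(2) by simp
  moreover have "set_pmf (erws_next p q r eps (xs ! k)) \<subseteq> {-1, 0, 1}" if "k < length xs" for k
    using assms(1) that by (intro set_pmf_erws_next) (auto dest: nth_mem)
  ultimately show ?thesis
    unfolding next_step_def set_bind_pmf by (subst set_pmf_of_set) (simp_all add: UN_subset_iff)
qed

lemma finite_set_pmf_next_step:
  "xs \<noteq> [] \<Longrightarrow> finite (set_pmf (next_step xs))"
  by (simp add: next_step_def set_pmf_of_set finite_set_pmf_erws_next)

lemma set_pmf_erws_steps:
  "set_pmf (erws_steps p q r eps s n) \<subseteq> {xs. set xs \<subseteq> {-1, 0, 1} \<and> length xs = n}"
proof (induction n)
  case (Suc n)
  show ?case
  proof (cases n)
    case (Suc m)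
    show ?thesis
    proof
      fix ys
      assume "ys \<in> set_pmf (erws_steps p q r eps s (Suc n))"
      then obtain xs y where xs: "xs \<in> set_pmf (erws_steps p q r eps s n)"
        and y: "y \<in> set_pmf (next_step xs)" and ys: "ys = xs @ [y]"
        unfolding \<open>n = Suc m\<close> erws_steps_Suc_Suc by auto
      have "set xs \<subseteq> {-1, 0, 1}" "length xs = n"
        using Suc.IH xs by auto
      moreover have "xs \<noteq> []"
        using calculation \<open>n = Suc m\<close> by auto
      ultimately have "y \<in> {-1, 0, 1}"
        using set_pmf_next_step[of xs] y by blast
      then show "ys \<in> {xs. set xs \<subseteq> {-1, 0, 1} \<and> length xs = Suc n}"
        using ys \<open>set xs \<subseteq> {-1, 0, 1}\<close> \<open>length xs = n\<close> by simp
    qed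
  qed (auto split: if_splits)
qed simp

lemma expectation_next_step:
  fixes f :: "int \<Rightarrow> real"
  assumes "xs \<noteq> []"
  shows "measure_pmf.expectation (next_step xs) f
           = (\<Sum>k<length xs. measure_pmf.expectation (erws_next p q r eps (xs ! k)) f) / length xs"
  using assms unfolding next_step_def
  by (subst pmf_expectation_bind_pmf_of_set)
     (simp_all add: finite_set_pmf_erws_next atLeast0LessThan lessThan_empty_iff sum_distrib_left divide_inverse_commute)

lemma finite_set_pmf_erws_steps: "finite (set_pmf (erws_steps p q r eps s n))"
  using set_pmf_erws_steps finite_lists_length_eq[of "{-1, 0, 1::int}" n] by (rule finite_subset) simp

lemma expectation_erws_steps_Suc_Suc:
  fixes f :: "int list \<Rightarrow> real"
  shows "measure_pmf.expectation (erws_steps p q r eps s (Suc (Suc n))) f =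
     measure_pmf.expectation (erws_steps p q r eps s (Suc n))
       (\<lambda>xs. measure_pmf.expectation (next_step xs) (\<lambda>y. f (xs @ [y])))"
proof -
  let ?M = "erws_steps p q r eps s (Suc n)"
  have "xs \<noteq> []" if "xs \<in> set_pmf ?M" for xs
    using that set_pmf_erws_steps by fastforce
  then have "measure_pmf.expectation (?M \<bind> (\<lambda>xs. map_pmf (\<lambda>y. xs @ [y]) (next_step xs))) f
      = (\<Sum>xs\<in>set_pmf ?M. pmf ?M xs *\<^sub>R measure_pmf.expectation (next_step xs) (\<lambda>y. f (xs @ [y])))"
    by (subst pmf_expectation_bind[OF finite_set_pmf_erws_steps _ subset_refl])
       (simp_all add: finite_set_pmf_next_step)
  also have "\<dots> = measure_pmf.expectation ?M (\<lambda>xs. measure_pmf.expectation (next_step xs) (\<lambda>y. f (xs @ [y])))"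
    by (subst integral_measure_pmf_real[OF finite_set_pmf_erws_steps]) (simp_all add: mult.commute)
  finally show ?thesis
    unfolding erws_steps_Suc_Suc .
qed

lemma next_step_mean:
  assumes "set xs \<subseteq> {-1, 0, 1}" "xs \<noteq> []"
  shows "measure_pmf.expectation (next_step xs) real_of_int = (p - q) * sum_list xs / length xs"
proof -
  have "measure_pmf.expectation (next_step xs) real_of_int = (\<Sum>k<length xs. (p - q) * (xs ! k)) / length xs"
    using assms by (simp add: expectation_next_step erws_next_mean subset_iff)
  then show ?thesis
    by (simp add: sum_list_sum_nth atLeast0LessThan sum_distrib_left)
qed

lemma next_step_square:
  assumes "set xs \<subseteq> {-1, 0, 1}" "xs \<noteq> []"
  shows "measure_pmf.expectation (next_step xs) (\<lambda>y. (real_of_int y)\<^sup>2)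
           = eps + (1 - r - eps) * (\<Sum>y\<leftarrow>xs. (real_of_int y)\<^sup>2) / length xs"
proof -
  have "measure_pmf.expectation (next_step xs) (\<lambda>y. (real_of_int y)\<^sup>2)
          = (\<Sum>k<length xs. eps + (1 - r - eps) * (real_of_int (xs ! k))\<^sup>2) / length xs"
    using assms by (simp add: expectation_next_step erws_next_square subset_iff)
  also have "\<dots> = (eps * length xs + (1 - r - eps) * (\<Sum>y\<leftarrow>xs. (real_of_int y)\<^sup>2)) / length xs"
    by (simp only: sum.distrib sum_distrib_left[symmetric] sum_list_sum_nth atLeast0LessThan
          sum_constant card_lessThan length_map nth_map) (simp add: mult.commute)
  finally show ?thesis
    using assms(2) by (simp add: field_simps)
qed

lemma expectation_erws_steps_cong:
  assumes "\<And>xs. set xs \<subseteq> {-1, 0, 1} \<Longrightarrow> length xs = n \<Longrightarrow> f xs = g xs"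
  shows "measure_pmf.expectation (erws_steps p q r eps s n) f = measure_pmf.expectation (erws_steps p q r eps s n) g"
  using assms set_pmf_erws_steps by (intro integral_cong_AE) (auto simp: AE_measure_pmf_iff)

lemma integrable_erws_steps [simp]:
  fixes f :: "int list \<Rightarrow> real"
  shows "integrable (measure_pmf (erws_steps p q r eps s n)) f"
  by (rule integrable_measure_pmf_finite[OF finite_set_pmf_erws_steps])

lemma second_moment_one: "erws_second_moment p q r eps s (Suc 0) = 1"
proof -
  have "(\<lambda>b. (real_of_int (sum_list [if b then 1 else - 1]))\<^sup>2) = (\<lambda>_. 1)"
    by (rule ext) simp
  then show ?thesis
    unfolding erws_second_moment_def erws_steps.simps integral_map_pmf by simp
qed

lemma expected_moves_one: "expected_moves (Suc 0) = 1"
proof -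
  have "(\<lambda>b. \<Sum>y\<leftarrow>[if b then 1 else - 1]. (real_of_int y)\<^sup>2) = (\<lambda>_. 1)"
    by (rule ext) simp
  then show ?thesis
    unfolding expected_moves_def erws_steps.simps integral_map_pmf by simp
qed

lemma second_moment_Suc_Suc:
  "erws_second_moment p q r eps s (Suc (Suc n)) =
     (1 + 2 * (p - q) / Suc n) * erws_second_moment p q r eps s (Suc n)
     + eps + (1 - r - eps) / Suc n * expected_moves (Suc n)"
proof -
  have step: "measure_pmf.expectation (next_step xs) (\<lambda>y. (real_of_int (sum_list (xs @ [y])))\<^sup>2)
      = (1 + 2 * (p - q) / Suc n) * (real_of_int (sum_list xs))\<^sup>2
        + eps + (1 - r - eps) / Suc n * (\<Sum>y\<leftarrow>xs. (real_of_int y)\<^sup>2)"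
    if "set xs \<subseteq> {-1, 0, 1}" "length xs = Suc n" for xs
  proof -
    have "xs \<noteq> []"
      using that(2) by auto
    with that have "measure_pmf.expectation (next_step xs) (\<lambda>y. (real_of_int (sum_list (xs @ [y])))\<^sup>2)
      = (real_of_int (sum_list xs))\<^sup>2 + 2 * real_of_int (sum_list xs) * ((p - q) * sum_list xs / Suc n)
        + (eps + (1 - r - eps) * (\<Sum>y\<leftarrow>xs. (real_of_int y)\<^sup>2) / Suc n)"
      by (simp add: expectation_shifted_square finite_set_pmf_next_step next_step_mean next_step_square)
    then show ?thesis
      by (simp add: power2_eq_square field_simps)
  qed
  show ?thesis
    unfolding erws_second_moment_def expected_moves_def expectation_erws_steps_Suc_Suc
    by (subst expectation_erws_steps_cong[OF step]) simp_all
qed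

lemma expected_moves_Suc_Suc:
  "expected_moves (Suc (Suc n)) = (1 + (1 - r - eps) / Suc n) * expected_moves (Suc n) + eps"
proof -
  have step: "measure_pmf.expectation (next_step xs) (\<lambda>y. \<Sum>z\<leftarrow>xs @ [y]. (real_of_int z)\<^sup>2)
      = (1 + (1 - r - eps) / Suc n) * (\<Sum>y\<leftarrow>xs. (real_of_int y)\<^sup>2) + eps"
    if "set xs \<subseteq> {-1, 0, 1}" "length xs = Suc n" for xs
  proof -
    have "xs \<noteq> []"
      using that(2) by auto
    with that show ?thesis
      by (simp add: integrable_measure_pmf_finite finite_set_pmf_next_step next_step_square field_simps)
  qed
  show ?thesis
    unfolding expected_moves_def expectation_erws_steps_Suc_Suc
    by (subst expectation_erws_steps_cong[OF step]) simp_all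
qed

end

definition erws_growth_constant :: "real \<Rightarrow> real \<Rightarrow> real" where
  "erws_growth_constant eps r =
     1 / Gamma (1 + eps * r) * (1 / (r * (eps + r)) + r / ((eps + r) * (eps + r + eps * r)))"

definition erws_moves_closed :: "real \<Rightarrow> real \<Rightarrow> real \<Rightarrow> real" where
  "erws_moves_closed eps r x =
     eps * x / (eps + r)
     + r / ((eps + r) * (1 - eps - r) * Gamma (1 - eps - r)) * Gamma_ratio (1 - eps - r) x"

definition erws_second_moment_closed :: "real \<Rightarrow> real \<Rightarrow> real \<Rightarrow> real" where
  "erws_second_moment_closed eps r x =
     - x / (r * (eps + r))
     - r / ((eps + r) * (eps + r + eps * r) * Gamma (1 - eps - r)) * Gamma_ratio (1 - eps - r) x
     + erws_growth_constant eps r * Gamma_ratio (1 + eps * r) x"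

context
  fixes eps r :: real
  assumes eps: "0 < eps" "eps < 1" and r: "0 < r" "r < 1" and eps_r: "eps + r \<noteq> 1"
begin

lemma one_minus_eps_r_not_nonpos_Int: "1 - eps - r \<notin> \<int>\<^sub>\<le>\<^sub>0"
proof
  assume "1 - eps - r \<in> \<int>\<^sub>\<le>\<^sub>0"
  then obtain k where k: "1 - eps - r = - real k"
    by (auto elim!: nonpos_Ints_cases')
  then have "real k < 1"
    using eps r by linarith
  then have "k = 0"
    by simp
  then show False
    using k eps_r by simp
qed

lemma one_plus_eps_r_pos: "0 < 1 + eps * r"
  using eps r by (simp add: add_pos_pos)

lemma erws_denominators_nonzero:
  "r \<noteq> 0" "eps + r \<noteq> 0" "1 - eps - r \<noteq> 0" "eps + r + eps * r \<noteq> 0" "Gamma (1 - eps - r) \<noteq> 0"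
proof -
  have "0 < eps * r"
    using eps r by simp
  then have "0 < eps + r + eps * r"
    using eps r by linarith
  then show "r \<noteq> 0" "eps + r \<noteq> 0" "1 - eps - r \<noteq> 0" "eps + r + eps * r \<noteq> 0" "Gamma (1 - eps - r) \<noteq> 0"
    using eps r eps_r one_minus_eps_r_not_nonpos_Int by (auto simp: Gamma_eq_zero_iff)
qed

lemma erws_moves_closed_one: "erws_moves_closed eps r 1 = 1"
  unfolding erws_moves_closed_def Gamma_ratio_one[OF one_minus_eps_r_not_nonpos_Int]
  using erws_denominators_nonzero by (simp add: divide_simps)

lemma erws_second_moment_closed_one: "erws_second_moment_closed eps r 1 = 1"
proof -
  have "Gamma_ratio (1 + eps * r) 1 = (1 + eps * r) * Gamma (1 + eps * r)"
    using one_plus_eps_r_pos by (intro Gamma_ratio_one) auto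
  moreover have "Gamma (1 + eps * r) > 0"
    using one_plus_eps_r_pos by simp
  ultimately show ?thesis
    unfolding erws_second_moment_closed_def erws_growth_constant_def
      Gamma_ratio_one[OF one_minus_eps_r_not_nonpos_Int]
    using erws_denominators_nonzero by (simp add: divide_simps) (simp add: algebra_simps)
qed

lemma erws_second_moment_closed_Gamma:
  assumes "x > 0"
  shows "erws_second_moment_closed eps r x =
           - x / (r * (eps + r))
           - r * Gamma (x + 1 - eps - r) / ((eps + r) * (eps + r + eps * r) * Gamma (1 - eps - r) * Gamma x)
           + 1 / Gamma (1 + eps * r) * (1 / (r * (eps + r)) + r / ((eps + r) * (eps + r + eps * r)))
             * Gamma (x + 1 + eps * r) / Gamma x"
proof -
  have "Gamma x > 0" "Gamma (1 + eps * r) > 0"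
    using assms one_plus_eps_r_pos by simp_all
  then show ?thesis
    using erws_denominators_nonzero
    by (simp add: erws_second_moment_closed_def erws_growth_constant_def Gamma_ratio_def divide_simps)
       (simp add: algebra_simps)
qed

lemma erws_second_moment_closed_asymptotics:
  "(\<lambda>n. erws_second_moment_closed eps r (real n) / real n powr (1 + eps * r))
     \<longlonglongrightarrow> erws_growth_constant eps r"
proof -
  define b c where "b = 1 + eps * r" and "c = 1 - eps - r"
  define A C where "A = 1 / (r * (eps + r))"
    and "C = r / ((eps + r) * (eps + r + eps * r) * Gamma c)"
  let ?K = "erws_growth_constant eps r"
  have "0 < eps * r"
    using eps r by simp
  then have "c - b < 0" "- (eps * r) < 0"
    using eps r unfolding b_def c_def by linarith+
  then have "(\<lambda>n. - A * real n powr (- (eps * r))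
        - C * (Gamma_ratio c (real n) / real n powr c) * real n powr (c - b)
        + ?K * (Gamma_ratio b (real n) / real n powr b))
      \<longlonglongrightarrow> - A * 0 - C * 1 * 0 + ?K * 1"
    using one_minus_eps_r_not_nonpos_Int one_plus_eps_r_pos unfolding b_def c_def
    by (intro tendsto_intros Gamma_ratio_asymptotics tendsto_neg_powr filterlim_real_sequentially) auto
  moreover have "eventually (\<lambda>n. - A * real n powr (- (eps * r))
        - C * (Gamma_ratio c (real n) / real n powr c) * real n powr (c - b)
        + ?K * (Gamma_ratio b (real n) / real n powr b)
      = erws_second_moment_closed eps r (real n) / real n powr b) sequentially"
    using eventually_gt_at_top[of "0::nat"]
  proof eventually_elim
    case (elim n)
    have powr_eqs: "real n powr (- (eps * r)) = real n / real n powr b"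
      "real n powr (c - b) = real n powr c / real n powr b"
      using elim by (simp_all add: b_def powr_add powr_minus_divide powr_diff)
    have "erws_second_moment_closed eps r (real n)
        = - A * real n - C * Gamma_ratio c (real n) + ?K * Gamma_ratio b (real n)"
      by (simp add: erws_second_moment_closed_def A_def C_def b_def c_def)
    then show ?case
      unfolding powr_eqs using elim by (simp add: divide_simps)
  qed
  ultimately show ?thesis
    unfolding b_def by (simp add: Lim_transform_eventually)
qed

context
  fixes x :: real
  assumes x: "x \<ge> 1"
begin

lemma Gamma_ratio_one_minus_eps_r_plus1:
  "Gamma_ratio (1 - eps - r) (x + 1) = (1 + (1 - eps - r) / x) * Gamma_ratio (1 - eps - r) x"
  using x eps r by (intro Gamma_ratio_plus1) auto

lemma Gamma_ratio_one_plus_eps_r_plus1: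
  "Gamma_ratio (1 + eps * r) (x + 1) = (1 + (1 + eps * r) / x) * Gamma_ratio (1 + eps * r) x"
  using x one_plus_eps_r_pos by (intro Gamma_ratio_plus1) auto

lemma erws_moves_closed_plus1:
  "erws_moves_closed eps r (x + 1) = (1 + (1 - r - eps) / x) * erws_moves_closed eps r x + eps"
  unfolding erws_moves_closed_def Gamma_ratio_one_minus_eps_r_plus1
  using x erws_denominators_nonzero by (simp add: divide_simps) (simp add: algebra_simps)

lemma erws_second_moment_closed_plus1:
  "erws_second_moment_closed eps r (x + 1)
     = (1 + (1 + eps * r) / x) * erws_second_moment_closed eps r x
       + eps + (1 - r - eps) / x * erws_moves_closed eps r x"
  unfolding erws_second_moment_closed_def erws_moves_closed_def
    Gamma_ratio_one_minus_eps_r_plus1 Gamma_ratio_one_plus_eps_r_plus1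
  using x erws_denominators_nonzero by (simp add: divide_simps) (simp add: algebra_simps)

end

end

context perturbed_erws
begin

lemma moments_closed_form:
  assumes params: "0 < eps" "eps < 1" "0 < r" "r < 1" "eps + r \<noteq> 1"
    and drift: "2 * (p - q) = 1 + eps * r"
  shows "erws_second_moment p q r eps s (Suc n) = erws_second_moment_closed eps r (Suc n)
         \<and> expected_moves (Suc n) = erws_moves_closed eps r (Suc n)"
proof (induction n)
  case 0
  show ?case
    using second_moment_one expected_moves_one
      erws_second_moment_closed_one[OF params] erws_moves_closed_one[OF params] by simp
next
  case (Suc n)
  have x: "real (Suc n) \<ge> 1" and Suc_Suc: "real (Suc (Suc n)) = real (Suc n) + 1"
    by simp_all
  show ?case
    unfolding second_moment_Suc_Suc expected_moves_Suc_Suc drift Suc.IH[THEN conjunct1] Suc.IH[THEN conjunct2]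
      Suc_Suc erws_second_moment_closed_plus1[OF params x] erws_moves_closed_plus1[OF params x]
    by (intro conjI refl)
qed

end

theorem mainTheorem9:
  fixes p q r eps s :: real
  assumes "0 < p" "p < 1" "0 < q" "q < 1" "0 < r" "r < 1" "p + q + r = 1"
    and "0 < eps" "eps < 1" "0 < s" "s < 1"
    and "eps + r \<noteq> 1"
    and "p - q = (1 + eps * r) / 2"
  shows "(\<forall>t::nat. t \<ge> 1 \<longrightarrow>
           erws_second_moment p q r eps s t =
             - real t / (r * (eps + r))
             - r * Gamma (real t + 1 - eps - r)
                 / ((eps + r) * (eps + r + eps * r) * Gamma (1 - eps - r) * Gamma (real t))
             + 1 / Gamma (1 + eps * r)
                 * (1 / (r * (eps + r)) + r / ((eps + r) * (eps + r + eps * r)))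
                 * Gamma (real t + 1 + eps * r) / Gamma (real t))
       \<and> ((\<lambda>t::nat. erws_second_moment p q r eps s t / real t powr (1 + eps * r))
           \<longlonglongrightarrow> 1 / Gamma (1 + eps * r)
                 * (1 / (r * (eps + r)) + r / ((eps + r) * (eps + r + eps * r))))"
proof -
  interpret perturbed_erws p q r eps s
    using assms by unfold_locales auto
  have params: "0 < eps" "eps < 1" "0 < r" "r < 1" "eps + r \<noteq> 1"
    using assms by auto
  have closed: "erws_second_moment p q r eps s t = erws_second_moment_closed eps r (real t)" if "t \<ge> 1" for t
    using moments_closed_form[OF params, of "t - 1"] assms(13) that by simp
  have "eventually (\<lambda>t. erws_second_moment_closed eps r (real t) / real t powr (1 + eps * r)
      = erws_second_moment p q r eps s t / real t powr (1 + eps * r)) sequentially"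
    using eventually_ge_at_top[of "1::nat"] by eventually_elim (simp add: closed)
  from Lim_transform_eventually[OF erws_second_moment_closed_asymptotics[OF params] this]
  show ?thesis
    using closed erws_second_moment_closed_Gamma[OF params] unfolding erws_growth_constant_def by simp
qed

end
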